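(* Let $X$ be a Banach space and $(x_n)_{n\in\mathbb{N}}$ a sequence in $X$ with $\liminf_n \|x_n\|=0$, and let $\mathcal{I}$ be an ideal on $\mathbb{N}$ with the Baire property. Suppose that there exists $s\in S$ such that $\left(\sum_{i=1}^n x_{s(i)}\right)_n$ is unbounded (equivalently, there exists $p\in P$ such that $\left(\sum_{i=1}^n x_{p(i)}\right)_n$ is unbounded). Then the sets $E(\mathcal{I},(x_n))=\left\{s \in S : \left(\sum_{i=1}^n x_{s(i)}\right)_n \text{ is } \mathcal{I}\text{-bounded}\right\}$ and $F(\mathcal{I},(x_n))=\left\{p \in P : \left(\sum_{i=1}^n x_{p(i)}\right)_n \text{ is } \mathcal{I}\text{-bounded}\right\}$ are meager in $S$ and $P$, respectively.
   Context: An ideal on $\mathbb{N}$ is a family $\mathcal{I}\subset \mathcal{P}(\mathbb{N})$ with $\emptyset\in\mathcal{I}$, closed under finite unions and subsets, with $\mathbb{N}\notin\mathcal{I}$ and containing all finite subsets of $\mathbb{N}$. Identifying $\mathcal{P}(\mathbb{N})$ with $\{0,1\}^{\mathbb{N}}$ (product topology), $\mathcal{I}$ has the Baire property if it is the symmetric difference of an open set and a meager set. A sequence $(y_n)$ in a normed space is $\mathcal{I}$-bounded if there is $M>0$ with $\{n\in\mathbb{N} : \|y_n\|>M\}\in\mathcal{I}$. $S=\{s\in\mathbb{N}^{\mathbb{N}} : s \text{ strictly increasing}\}$, $P=\{p\in\mathbb{N}^{\mathbb{N}} : p \text{ a bijection of }\mathbb{N}\}$, with the subspace topology of $\mathbb{N}^{\mathbb{N}}$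 (product of discrete spaces). *)

theory Defs
  imports "HOL-Analysis.Analysis"
begin

definition nowhere_dense_in :: "'a topology \<Rightarrow> 'a set \<Rightarrow> bool" where
  "nowhere_dense_in T A \<longleftrightarrow> A \<subseteq> topspace T \<and> T interior_of (T closure_of A) = {}"

definition meager_in :: "'a topology \<Rightarrow> 'a set \<Rightarrow> bool" where
  "meager_in T A \<longleftrightarrow> A \<subseteq> topspace T \<and>
     (\<exists>F :: nat \<Rightarrow> 'a set. (\<forall>n. nowhere_dense_in T (F n)) \<and> A \<subseteq> (\<Union>n. F n))"

definition has_Baire_property_in :: "'a topology \<Rightarrow> 'a set \<Rightarrow> bool" where
  "has_Baire_property_in T A \<longleftrightarrow>
     (\<exists>U M. openin T U \<and> meager_in T M \<and> A = (U - M) \<union> (M - U))"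

definition cantor_top :: "(nat \<Rightarrow> bool) topology" where
  "cantor_top = product_topology (\<lambda>_. discrete_topology UNIV) UNIV"

definition baire_top :: "(nat \<Rightarrow> nat) topology" where
  "baire_top = product_topology (\<lambda>_. discrete_topology UNIV) UNIV"

definition is_ideal :: "nat set set \<Rightarrow> bool" where
  "is_ideal I \<longleftrightarrow> {} \<in> I \<and> (\<forall>A\<in>I. \<forall>B\<in>I. A \<union> B \<in> I) \<and>
     (\<forall>A\<in>I. \<forall>B. B \<subseteq> A \<longrightarrow> B \<in> I) \<and> UNIV \<notin> I \<and> (\<forall>A. finite A \<longrightarrow> A \<in> I)"

text \<open>Identification of \<open>P(\<nat>)\<close> with \<open>{0,1}^\<nat>\<close> via characteristic functions.\<close>
definition ideal_Baire_property :: "nat set set \<Rightarrow> bool" where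
  "ideal_Baire_property I \<longleftrightarrow> has_Baire_property_in cantor_top ((\<lambda>A n. n \<in> A) ` I)"

definition I_bounded :: "nat set set \<Rightarrow> (nat \<Rightarrow> 'a::real_normed_vector) \<Rightarrow> bool" where
  "I_bounded I y \<longleftrightarrow> (\<exists>M>0. {n. norm (y n) > M} \<in> I)"

definition incr_seqs :: "(nat \<Rightarrow> nat) set" where
  "incr_seqs = {s. strict_mono s}"

definition perms_nat :: "(nat \<Rightarrow> nat) set" where
  "perms_nat = {p. bij p}"

end

theory Submission
  imports Defs
begin

(*
  An ideal with the Baire property is meager, so by Talagrand's characterisation there is a
  partition of \<nat> into finite intervals P_k such that every member of the ideal misses a point
  of all but finitely many P_k. Hence, if the partial sums along s are I-bounded by M, then from
  some block j on every P_k contains an index where the partial sum has norm at most M.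
  For fixed M and j these s form a nowhere dense set, in S as well as in P: a finite initial
  segment can be continued first by a long stretch of the given sequence with unbounded
  partial sums, pushing the norm of the partial sum above M + 1, and then by terms so small
  (liminf of the norms is 0) that the partial sums stay above M on a whole late block.
*)

abbreviation discrete_power_top :: "(nat \<Rightarrow> 'b) topology" where
  "discrete_power_top \<equiv> product_topology (\<lambda>_. discrete_topology UNIV) UNIV"

section \<open>Cylinders in countable powers of discrete spaces\<close>

definition cyl :: "(nat \<Rightarrow> 'b) \<Rightarrow> nat \<Rightarrow> (nat \<Rightarrow> 'b) set" where
  "cyl Y m = {Z. \<forall>i<m. Z i = Y i}"

lemma cyl_antimono: "m \<le> m' \<Longrightarrow> \<forall>i<m. Y' i = Y i \<Longrightarrow> cyl Y' m' \<subseteq> cyl Y m"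
  by (auto simp: cyl_def)

lemma openin_cyl: "openin discrete_power_top (cyl Y m)"
  unfolding openin_product_topology_alt
proof (intro ballI)
  fix Z assume "Z \<in> cyl Y m"
  then show "\<exists>U. finite {i \<in> UNIV. U i \<noteq> topspace (discrete_topology UNIV)} \<and>
          (\<forall>i\<in>UNIV. openin (discrete_topology UNIV) (U i)) \<and> Z \<in> Pi\<^sub>E UNIV U \<and> Pi\<^sub>E UNIV U \<subseteq> cyl Y m"
    by (intro exI[of _ "\<lambda>i. if i < m then {Y i} else UNIV"])
      (auto simp: cyl_def PiE_def Pi_def intro: finite_subset[of _ "{..<m}"])
qed

lemma openin_imp_cyl_subset:
  assumes "openin discrete_power_top U" "Y \<in> U"
  obtains m where "cyl Y m \<subseteq> U"
proof -
  obtain V where V: "finite {i. V i \<noteq> UNIV}" "Y \<in> Pi\<^sub>E UNIV V" "Pi\<^sub>E UNIV V \<subseteq> U"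
    using assms unfolding openin_product_topology_alt by auto
  then obtain m where "\<forall>i. V i \<noteq> UNIV \<longrightarrow> i < m"
    by (auto simp: finite_nat_set_iff_bounded)
  then have "cyl Y m \<subseteq> Pi\<^sub>E UNIV V"
    using V(2) by (auto simp: cyl_def PiE_def Pi_def) (metis UNIV_I not_less)
  with V(3) show ?thesis
    using that by blast
qed

lemma openin_subtopology_cyl: "openin (subtopology discrete_power_top S) (S \<inter> cyl Y m)"
  by (simp add: openin_subtopology_Int2 openin_cyl)

lemma openin_subtopology_imp_cyl_subset:
  assumes "openin (subtopology discrete_power_top S) V" "Y \<in> V"
  obtains m where "S \<inter> cyl Y m \<subseteq> V"
proof -
  obtain U where U: "openin discrete_power_top U" "V = U \<inter> S"
    using assms(1) unfolding openin_subtopology by blast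
  moreover obtain m where "cyl Y m \<subseteq> U"
    using openin_imp_cyl_subset U assms(2) by blast
  ultimately show ?thesis
    using that by blast
qed

definition nowhere_dense_cyl :: "(nat \<Rightarrow> 'b) set \<Rightarrow> (nat \<Rightarrow> 'b) set \<Rightarrow> bool" where
  "nowhere_dense_cyl S F \<longleftrightarrow>
     (\<forall>X\<in>S. \<forall>n. \<exists>Y\<in>S. \<exists>m\<ge>n. (\<forall>i<n. Y i = X i) \<and> S \<inter> cyl Y m \<inter> F = {})"

lemma nowhere_dense_in_iff_cyl:
  assumes "F \<subseteq> S"
  shows "nowhere_dense_in (subtopology discrete_power_top S) F \<longleftrightarrow> nowhere_dense_cyl S F"
    (is "nowhere_dense_in ?T F \<longleftrightarrow> _")
proof
  assume nd: "nowhere_dense_in ?T F"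
  show "nowhere_dense_cyl S F"
    unfolding nowhere_dense_cyl_def
  proof (intro ballI allI)
    fix X n assume "X \<in> S"
    have "\<not> S \<inter> cyl X n \<subseteq> ?T closure_of F"
    proof
      assume "S \<inter> cyl X n \<subseteq> ?T closure_of F"
      then have "S \<inter> cyl X n \<subseteq> ?T interior_of (?T closure_of F)"
        by (rule interior_of_maximal) (rule openin_subtopology_cyl)
      with \<open>X \<in> S\<close> nd show False
        by (auto simp: nowhere_dense_in_def cyl_def)
    qed
    then obtain W where W: "W \<in> S" "W \<in> cyl X n" "W \<notin> ?T closure_of F"
      by blast
    then obtain V where V: "W \<in> V" "openin ?T V" "V \<inter> F = {}"
      unfolding in_closure_of by auto
    then obtain k where "S \<inter> cyl W k \<subseteq> V"
      using openin_subtopology_imp_cyl_subset by metis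
    moreover have "cyl W (max n k) \<subseteq> cyl W k"
      by (simp add: cyl_antimono)
    ultimately show "\<exists>Y\<in>S. \<exists>m\<ge>n. (\<forall>i<n. Y i = X i) \<and> S \<inter> cyl Y m \<inter> F = {}"
      using W V(3) by (intro bexI[of _ W] exI[of _ "max n k"]) (auto simp: cyl_def)
  qed
next
  assume nd: "nowhere_dense_cyl S F"
  have "W \<notin> ?T interior_of (?T closure_of F)" for W
  proof
    assume W: "W \<in> ?T interior_of (?T closure_of F)"
    then have "W \<in> S"
      using interior_of_subset_topspace by fastforce
    obtain n where n: "S \<inter> cyl W n \<subseteq> ?T interior_of (?T closure_of F)"
      using openin_subtopology_imp_cyl_subset[OF openin_interior_of W] by blast
    obtain Y m where Y: "Y \<in> S" "\<forall>i<n. Y i = W i" "S \<inter> cyl Y m \<inter> F = {}"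
      using nd \<open>W \<in> S\<close> unfolding nowhere_dense_cyl_def by blast
    have "Y \<in> ?T closure_of F"
      using n Y(1,2) interior_of_subset by (fastforce simp: cyl_def)
    then have "\<exists>Z. Z \<in> F \<and> Z \<in> S \<inter> cyl Y m"
      using openin_subtopology_cyl[of S Y m] Y(1) unfolding in_closure_of
      by (elim conjE allE[of _ "S \<inter> cyl Y m"]) (simp add: cyl_def)
    with Y(3) show False
      by blast
  qed
  then show "nowhere_dense_in ?T F"
    using assms by (auto simp: nowhere_dense_in_def)
qed

lemma meager_in_subtopology_iff_cyl:
  "meager_in (subtopology discrete_power_top S) M \<longleftrightarrow>
     (\<exists>F :: nat \<Rightarrow> (nat \<Rightarrow> 'b) set. (\<forall>j. F j \<subseteq> S \<and> nowhere_dense_cyl S (F j)) \<and> M \<subseteq> (\<Union>j. F j))"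
    (is "?meager \<longleftrightarrow> ?cyl")
proof
  assume ?meager
  then obtain F :: "nat \<Rightarrow> (nat \<Rightarrow> 'b) set" where
    F: "\<And>j. nowhere_dense_in (subtopology discrete_power_top S) (F j)" "M \<subseteq> (\<Union>j. F j)"
    unfolding meager_in_def by blast
  then have "F j \<subseteq> S" for j
    by (simp add: nowhere_dense_in_def)
  with F show ?cyl
    by (metis nowhere_dense_in_iff_cyl)
next
  assume ?cyl
  then obtain F :: "nat \<Rightarrow> (nat \<Rightarrow> 'b) set" where
    F: "\<And>j. F j \<subseteq> S" "\<And>j. nowhere_dense_cyl S (F j)" "M \<subseteq> (\<Union>j. F j)"
    by blast
  have "M \<subseteq> S"
    using F(1,3) by blast
  moreover have "\<And>j. nowhere_dense_in (subtopology discrete_power_top S) (F j)"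
    using F(1,2) by (simp add: nowhere_dense_in_iff_cyl)
  ultimately show ?meager
    using F(3) unfolding meager_in_def by auto
qed

lemma meager_in_cantor_iff_cyl:
  "meager_in cantor_top M \<longleftrightarrow>
     (\<exists>F :: nat \<Rightarrow> (nat \<Rightarrow> bool) set. (\<forall>j. nowhere_dense_cyl UNIV (F j)) \<and> M \<subseteq> (\<Union>j. F j))"
  using meager_in_subtopology_iff_cyl[of UNIV M] by (simp add: cantor_top_def)

lemma nowhere_dense_cyl_Un:
  assumes "nowhere_dense_cyl S F" "nowhere_dense_cyl S G"
  shows "nowhere_dense_cyl S (F \<union> G)"
  unfolding nowhere_dense_cyl_def
proof (intro ballI allI)
  fix X n assume "X \<in> S"
  then obtain Y m where Y: "Y \<in> S" "n \<le> m" "\<forall>i<n. Y i = X i" "S \<inter> cyl Y m \<inter> F = {}"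
    using assms(1) unfolding nowhere_dense_cyl_def by blast
  then obtain Y' m' where Y': "Y' \<in> S" "m \<le> m'" "\<forall>i<m. Y' i = Y i" "S \<inter> cyl Y' m' \<inter> G = {}"
    using assms(2) unfolding nowhere_dense_cyl_def by blast
  have "cyl Y' m' \<subseteq> cyl Y m"
    using Y'(2,3) by (rule cyl_antimono)
  then show "\<exists>Y\<in>S. \<exists>m\<ge>n. (\<forall>i<n. Y i = X i) \<and> S \<inter> cyl Y m \<inter> (F \<union> G) = {}"
    using Y Y' by (intro bexI[of _ Y'] exI[of _ m']) auto
qed

lemma nowhere_dense_cyl_UN_atMost:
  "(\<And>j. nowhere_dense_cyl S (F j)) \<Longrightarrow> nowhere_dense_cyl S (\<Union>j\<le>(k::nat). F j)"
  by (induction k) (auto simp: atMost_Suc nowhere_dense_cyl_Un)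

lemma nowhere_dense_cyl_vimage_override:
  assumes F: "nowhere_dense_cyl UNIV F" and f: "bij f"
  shows "nowhere_dense_cyl UNIV {Z. override_on (f \<circ> Z) X {..<n} \<in> F}"
  unfolding nowhere_dense_cyl_def
proof (intro ballI allI)
  fix W :: "nat \<Rightarrow> 'b" and k
  obtain Y' m where
    Y': "max k n \<le> m" "\<forall>i<max k n. Y' i = override_on (f \<circ> W) X {..<n} i" "cyl Y' m \<inter> F = {}"
    using F[unfolded nowhere_dense_cyl_def, rule_format, of "override_on (f \<circ> W) X {..<n}" "max k n"]
    by auto
  define Y where "Y = override_on (inv f \<circ> Y') W {..<n}"
  have "override_on (f \<circ> Z) X {..<n} \<in> cyl Y' m" if "Z \<in> cyl Y m" for Z
    unfolding cyl_def
  proof (intro CollectI allI impI)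
    fix i assume "i < m"
    with that have "Z i = Y i"
      by (simp add: cyl_def)
    then show "override_on (f \<circ> Z) X {..<n} i = Y' i"
      using Y'(2) surj_f_inv_f[OF bij_is_surj[OF f]] by (simp add: Y_def override_on_def)
  qed
  then have "UNIV \<inter> cyl Y m \<inter> {Z. override_on (f \<circ> Z) X {..<n} \<in> F} = {}"
    using Y'(3) by blast
  moreover have "\<forall>i<k. Y i = W i"
    using Y'(2) by (simp add: Y_def override_on_def inv_f_f[OF bij_is_inj[OF f]])
  ultimately show "\<exists>Y\<in>UNIV. \<exists>m'\<ge>k. (\<forall>i<k. Y i = W i) \<and>
      UNIV \<inter> cyl Y m' \<inter> {Z. override_on (f \<circ> Z) X {..<n} \<in> F} = {}"
    using Y'(1) by (intro bexI[of _ Y] exI[of _ m]) auto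
qed

lemma meager_in_interior_of_empty:
  assumes "completely_metrizable_space T" "meager_in T M"
  shows "T interior_of M = {}"
proof -
  obtain F :: "nat \<Rightarrow> 'a set" where F: "\<And>n. nowhere_dense_in T (F n)" "M \<subseteq> (\<Union>n. F n)"
    using assms(2) unfolding meager_in_def by blast
  have "M \<subseteq> (\<Union>n. T closure_of F n)"
  proof
    fix z assume "z \<in> M"
    then obtain n where "z \<in> F n"
      using F(2) by blast
    moreover have "F n \<subseteq> T closure_of F n"
      using F(1)[of n] by (simp add: nowhere_dense_in_def closure_of_subset)
    ultimately show "z \<in> (\<Union>n. T closure_of F n)"
      by blast
  qed
  then have "T interior_of M \<subseteq> T interior_of (\<Union>n. T closure_of F n)"
    by (rule interior_of_mono)
  also have "\<dots> = {}"
  proof (rule Baire_category_alt)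
    show "completely_metrizable_space T \<or> locally_compact_space T \<and> regular_space T"
      using assms(1) ..
    show "closedin T C \<and> T interior_of C = {}" if C: "C \<in> range (\<lambda>n. T closure_of F n)" for C
    proof -
      obtain n where "C = T closure_of F n"
        using C by blast
      then show ?thesis
        using F(1)[of n] unfolding nowhere_dense_in_def by simp
    qed
  qed simp
  finally show ?thesis
    by blast
qed

lemma completely_metrizable_cantor_top: "completely_metrizable_space cantor_top"
  unfolding cantor_top_def
  by (simp add: completely_metrizable_space_product_topology completely_metrizable_space_discrete_topology)

section \<open>Meager ideals\<close>

lemma exists_block_pattern_finite:
  assumes F: "nowhere_dense_cyl UNIV F" and P: "finite P"
  shows "\<exists>m t. n < m \<and> (\<forall>X\<in>P. cyl (override_on t X {..<n}) m \<inter> F = {})"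
  using P
proof (induction P rule: finite_induct)
  case empty
  show ?case
    by (intro exI[of _ "Suc n"]) auto
next
  case (insert X P)
  then obtain m t where mt: "n < m" "\<forall>X\<in>P. cyl (override_on t X {..<n}) m \<inter> F = {}"
    by blast
  obtain Y m' where Y: "m \<le> m'" "\<forall>i<m. Y i = override_on t X {..<n} i" "cyl Y m' \<inter> F = {}"
    using F[unfolded nowhere_dense_cyl_def, rule_format, of "override_on t X {..<n}" m] by auto
  have "cyl (override_on Y X {..<n}) m' \<subseteq> cyl Y m'"
    using Y(2) mt(1) by (auto simp: cyl_def override_on_def)
  moreover have "cyl (override_on Y X' {..<n}) m' \<subseteq> cyl (override_on t X' {..<n}) m" for X'
    using Y(1,2) by (auto simp: cyl_def override_on_def)
  ultimately show ?case
    using mt Y by (intro exI[of _ m'] exI[of _ Y]) fastforce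
qed

lemma exists_block_pattern:
  fixes F :: "(nat \<Rightarrow> 'b::finite) set"
  assumes F: "nowhere_dense_cyl UNIV F"
  shows "\<exists>m t. n < m \<and> (\<forall>X. cyl (override_on t X {..<n}) m \<inter> F = {})"
proof -
  have "finite (Pi\<^sub>E {..<n} (\<lambda>_. UNIV :: 'b set))"
    by (simp add: finite_PiE)
  then obtain m t where
    mt: "n < m" "\<forall>X\<in>Pi\<^sub>E {..<n} (\<lambda>_. UNIV). cyl (override_on t X {..<n}) m \<inter> F = {}"
    using exists_block_pattern_finite[OF F] by blast
  have "cyl (override_on t X {..<n}) m \<inter> F = {}" for X
  proof -
    have "override_on t X {..<n} = override_on t (restrict X {..<n}) {..<n}"
      by (auto simp: override_on_def)
    moreover have "restrict X {..<n} \<in> Pi\<^sub>E {..<n} (\<lambda>_. UNIV)"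
      by simp
    ultimately show ?thesis
      using mt(2) by metis
  qed
  with mt(1) show ?thesis
    by blast
qed

lemma exists_interval_partition_patterns:
  fixes G :: "nat \<Rightarrow> (nat \<Rightarrow> 'b::finite) set"
  assumes "\<And>k. nowhere_dense_cyl UNIV (G k)"
  obtains nk tk where "strict_mono nk"
    "\<And>k X. cyl (override_on (tk k) X {..<nk k}) (nk (Suc k)) \<inter> G k = {}"
proof -
  have "\<forall>k n. \<exists>m t. n < m \<and> (\<forall>X. cyl (override_on t X {..<n}) m \<inter> G k = {})"
    using assms by (blast intro: exists_block_pattern)
  then obtain m t where
    mt: "\<And>k n. n < m k n" "\<And>k n X. cyl (override_on (t k n) X {..<n}) (m k n) \<inter> G k = {}"
    by metis
  define nk where "nk = rec_nat 0 m"
  have nk_Suc: "nk (Suc k) = m k (nk k)" for k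
    by (simp add: nk_def)
  show ?thesis
  proof
    show "strict_mono nk"
      unfolding strict_mono_Suc_iff nk_Suc using mt(1) by blast
    show "cyl (override_on (t k (nk k)) X {..<nk k}) (nk (Suc k)) \<inter> G k = {}" for k X
      unfolding nk_Suc by (rule mt(2))
  qed
qed

lemma strict_mono_interval_unique:
  assumes "strict_mono nk" "i \<in> {nk k..<nk (Suc k)}" "i \<in> {nk k'..<nk (Suc k')}"
  shows "k = k'"
proof (rule ccontr)
  assume "k \<noteq> k'"
  then consider "Suc k \<le> k'" | "Suc k' \<le> k"
    by linarith
  then show False
  proof cases
    case 1
    then have "nk (Suc k) \<le> nk k'"
      using strict_mono_less_eq[OF assms(1)] by blast
    with assms(2,3) show False
      by auto
  next
    case 2
    then have "nk (Suc k') \<le> nk k"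
      using strict_mono_less_eq[OF assms(1)] by blast
    with assms(2,3) show False
      by auto
  qed
qed

text \<open>One direction of Talagrand's characterisation of meager ideals.\<close>

lemma meager_hereditary_interval_partition:
  fixes I :: "nat set set"
  assumes hered: "\<forall>A\<in>I. \<forall>B\<subseteq>A. B \<in> I"
    and meager: "meager_in cantor_top ((\<lambda>A n. n \<in> A) ` I)"
  shows "\<exists>nk. strict_mono nk \<and> (\<forall>A\<in>I. \<exists>j. \<forall>k\<ge>j. \<not> {nk k..<nk (Suc k)} \<subseteq> A)"
proof -
  obtain F :: "nat \<Rightarrow> (nat \<Rightarrow> bool) set"
    where F: "\<And>j. nowhere_dense_cyl UNIV (F j)" "(\<lambda>A n. n \<in> A) ` I \<subseteq> (\<Union>j. F j)"
    using meager unfolding meager_in_cantor_iff_cyl by blast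
  define G where "G k = (\<Union>j\<le>k. F j)" for k
  obtain nk tk where nk: "strict_mono nk"
    and tk: "\<And>k X. cyl (override_on (tk k) X {..<nk k}) (nk (Suc k)) \<inter> G k = {}"
    using exists_interval_partition_patterns[of G] F(1) nowhere_dense_cyl_UN_atMost
    unfolding G_def by metis
  have "\<exists>j. \<forall>k\<ge>j. \<not> {nk k..<nk (Suc k)} \<subseteq> A" if "A \<in> I" for A
  proof (rule ccontr)
    assume "\<not> ?thesis"
    then have often: "\<forall>j. \<exists>k\<ge>j. {nk k..<nk (Suc k)} \<subseteq> A"
      by blast
    define K where "K = {k. {nk k..<nk (Suc k)} \<subseteq> A}"
    \<comment> \<open>\<open>B\<close> follows the pattern \<open>tk k\<close> on every block \<open>k\<close> inside \<open>A\<close>, so for each such \<open>k\<close> it lies in a cylinder disjoint from \<open>G k\<close>.\<close>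
    define B where "B = {i \<in> A. \<forall>k\<in>K. i \<in> {nk k..<nk (Suc k)} \<longrightarrow> tk k i}"
    have "B \<in> I"
      using hered \<open>A \<in> I\<close> by (auto simp: B_def)
    then obtain j where j: "(\<lambda>n. n \<in> B) \<in> F j"
      using F(2) by blast
    obtain k where k: "j \<le> k" "k \<in> K"
      using often by (auto simp: K_def)
    have "i \<in> B \<longleftrightarrow> tk k i" if "i \<in> {nk k..<nk (Suc k)}" for i
    proof -
      have "i \<in> A"
        using k(2) that by (auto simp: K_def)
      moreover have "k' = k" if "i \<in> {nk k'..<nk (Suc k')}" for k'
        using strict_mono_interval_unique[OF nk] \<open>i \<in> {nk k..<nk (Suc k)}\<close> that by blast
      ultimately show ?thesis
        using k(2) that unfolding B_def by blast
    qed
    then have "(\<lambda>n. n \<in> B) \<in> cyl (override_on (tk k) (\<lambda>n. n \<in> B) {..<nk k}) (nk (Suc k))"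
      by (auto simp: cyl_def override_on_def)
    moreover have "(\<lambda>n. n \<in> B) \<in> G k"
      using j k(1) by (auto simp: G_def)
    ultimately show False
      using tk by blast
  qed
  with nk show ?thesis
    by blast
qed

lemma exists_complementary_continuations_outside:
  assumes "meager_in cantor_top M"
  obtains Z :: "nat \<Rightarrow> bool" where "\<And>b. override_on (\<lambda>i. Z i = b) X {..<n} \<notin> M"
proof -
  obtain F :: "nat \<Rightarrow> (nat \<Rightarrow> bool) set" where F: "\<And>j. nowhere_dense_cyl UNIV (F j)" "M \<subseteq> (\<Union>j. F j)"
    using assms unfolding meager_in_cantor_iff_cyl by blast
  define g where "g b Z = override_on ((\<lambda>z. z = b) \<circ> Z) X {..<n}" for b and Z :: "nat \<Rightarrow> bool"
  define H where "H j = {Z. g True Z \<in> F j} \<union> {Z. g False Z \<in> F j}" for j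
  have "bij (\<lambda>z::bool. z = b)" for b
    by (rule involuntory_imp_bij) (cases b; simp)
  then have "nowhere_dense_cyl UNIV (H j)" for j
    unfolding H_def g_def using F(1) by (intro nowhere_dense_cyl_Un nowhere_dense_cyl_vimage_override)
  then have "meager_in cantor_top (\<Union>j. H j)"
    unfolding meager_in_cantor_iff_cyl by blast
  then have "cantor_top interior_of (\<Union>j. H j) = {}"
    by (rule meager_in_interior_of_empty[OF completely_metrizable_cantor_top])
  moreover have "topspace cantor_top = UNIV"
    by (simp add: cantor_top_def)
  ultimately have "(\<Union>j. H j) \<noteq> UNIV"
    by (metis interior_of_topspace empty_not_UNIV)
  then obtain Z where Z: "\<And>j. Z \<notin> H j"
    by blast
  have "g b Z \<notin> F j" for b j
    using Z[of j] by (cases b) (simp_all add: H_def)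
  then have "override_on (\<lambda>i. Z i = b) X {..<n} \<notin> M" for b
    using F(2) by (auto simp: g_def o_def)
  then show ?thesis
    by (rule that)
qed

text \<open>If \<open>I\<close> were not meager, \<open>U\<close> would contain a cylinder \<open>cyl X n\<close>, and \<open>I\<close> would contain
  the two sets obtained by continuing the first \<open>n\<close> values of \<open>X\<close> by a generic \<open>Z\<close> and by its
  complement; together with the finite set \<open>{..<n}\<close> they cover \<open>\<nat>\<close>.\<close>

lemma meager_if_ideal_Baire_property:
  assumes ideal: "is_ideal I" and baire: "ideal_Baire_property I"
  shows "meager_in cantor_top ((\<lambda>A n. n \<in> A) ` I)"
proof -
  let ?C = "(\<lambda>A n. n \<in> A) ` I"
  obtain U M where U: "openin cantor_top U" and M: "meager_in cantor_top M"
    and C: "?C = (U - M) \<union> (M - U)"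
    using baire unfolding ideal_Baire_property_def has_Baire_property_in_def by blast
  show ?thesis
  proof (cases "U = {}")
    case True
    with C M show ?thesis
      by simp
  next
    case False
    then obtain X where "X \<in> U"
      by blast
    then obtain n where n: "cyl X n \<subseteq> U"
      using U openin_imp_cyl_subset unfolding cantor_top_def by metis
    obtain Z :: "nat \<Rightarrow> bool" where Z: "\<And>b. override_on (\<lambda>i. Z i = b) X {..<n} \<notin> M"
      using exists_complementary_continuations_outside[OF M] by blast
    define A where "A b = {i. override_on (\<lambda>i. Z i = b) X {..<n} i}" for b
    have "A b \<in> I" for b
    proof -
      have "override_on (\<lambda>i. Z i = b) X {..<n} \<in> U"
        using n by (simp add: cyl_def override_on_def subset_iff)
      with Z have "(\<lambda>i. i \<in> A b) \<in> ?C"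
        using C by (simp add: A_def)
      then obtain A' where "A' \<in> I" "(\<lambda>i. i \<in> A b) = (\<lambda>i. i \<in> A')"
        by blast
      then show ?thesis
        by (metis Collect_mem_eq)
    qed
    moreover have "{..<n} \<in> I"
      using ideal by (simp add: is_ideal_def)
    moreover have "\<And>A B. A \<in> I \<Longrightarrow> B \<in> I \<Longrightarrow> A \<union> B \<in> I"
      using ideal by (simp add: is_ideal_def)
    ultimately have "A True \<union> A False \<union> {..<n} \<in> I"
      by blast
    moreover have "A True \<union> A False \<union> {..<n} = UNIV"
      by (auto simp: A_def override_on_def)
    ultimately have "UNIV \<in> I"
      by simp
    with ideal show ?thesis
      by (simp add: is_ideal_def)
  qed
qed

section \<open>Rearrangements of a series\<close>

lemma sum_lessThan_add: "(\<Sum>i<m + n. f i) = (\<Sum>i<m. f i) + (\<Sum>i<n. f (m + i))" for m n :: nat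
  by (induction n) (simp_all add: add.assoc)

lemma norm_sum_less_one:
  fixes y :: "nat \<Rightarrow> 'a::real_normed_vector"
  assumes "\<And>b. b < d \<Longrightarrow> norm (y b) < 1 / (real L + 1)" "d \<le> L"
  shows "norm (\<Sum>b<d. y b) < 1"
proof -
  have "norm (\<Sum>b<d. y b) \<le> (\<Sum>b<d. norm (y b))"
    by (rule norm_sum)
  also have "\<dots> \<le> real d * (1 / (real L + 1))"
    using sum_bounded_above[of "{..<d}" "\<lambda>b. norm (y b)" "1 / (real L + 1)"] assms(1)
    by (simp add: less_imp_le)
  also have "\<dots> \<le> real L * (1 / (real L + 1))"
    using assms(2) by (intro mult_right_mono) auto
  also have "\<dots> < 1"
    by (simp add: field_simps)
  finally show ?thesis .
qed

lemma infinite_small_if_liminf_norm_zero: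
  fixes x :: "nat \<Rightarrow> 'a::real_normed_vector"
  assumes "liminf (\<lambda>n. ereal (norm (x n))) = 0" "\<epsilon> > 0"
  shows "infinite {u. norm (x u) < \<epsilon>}"
proof
  assume "finite {u. norm (x u) < \<epsilon>}"
  then have "\<forall>\<^sub>F n in sequentially. ereal \<epsilon> \<le> ereal (norm (x n))"
    by (simp add: cofinite_eq_sequentially[symmetric] eventually_cofinite not_le)
  then have "ereal \<epsilon> \<le> liminf (\<lambda>n. ereal (norm (x n)))"
    by (rule Liminf_bounded)
  with assms show False
    by simp
qed

lemma unbounded_shifted_partial_sums:
  fixes x :: "nat \<Rightarrow> 'a::real_normed_vector" and t :: "nat \<Rightarrow> nat"
  assumes "\<not> bounded (range (\<lambda>N. \<Sum>i\<le>N. x (t i)))"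
  shows "\<not> bounded (range (\<lambda>e. \<sigma> + (\<Sum>a<e. x (t (r + a)))))"
proof
  let ?shifted = "range (\<lambda>e. \<sigma> + (\<Sum>a<e. x (t (r + a))))"
  let ?P = "\<Sum>i<r. x (t i)"
  assume "bounded ?shifted"
  then have "bounded ((\<lambda>N. \<Sum>i\<le>N. x (t i)) ` {..<r} \<union> (+) (?P - \<sigma>) ` ?shifted)"
    by (simp add: bounded_translation finite_imp_bounded)
  moreover have "range (\<lambda>N. \<Sum>i\<le>N. x (t i)) \<subseteq> (\<lambda>N. \<Sum>i\<le>N. x (t i)) ` {..<r} \<union> (+) (?P - \<sigma>) ` ?shifted"
  proof
    fix y assume "y \<in> range (\<lambda>N. \<Sum>i\<le>N. x (t i))"
    then obtain N where y: "y = (\<Sum>i\<le>N. x (t i))"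
      by blast
    show "y \<in> (\<lambda>N. \<Sum>i\<le>N. x (t i)) ` {..<r} \<union> (+) (?P - \<sigma>) ` ?shifted"
    proof (cases "N < r")
      case True
      with y show ?thesis
        by blast
    next
      case False
      then have "y = (\<Sum>i<r + (Suc N - r). x (t i))"
        by (simp add: y lessThan_Suc_atMost[symmetric])
      also have "\<dots> = (?P - \<sigma>) + (\<sigma> + (\<Sum>a<Suc N - r. x (t (r + a))))"
        by (simp add: sum_lessThan_add)
      finally show ?thesis
        by blast
    qed
  qed
  ultimately show False
    using assms bounded_subset by blast
qed

lemma exists_strict_mono_small_above:
  fixes x :: "nat \<Rightarrow> 'a::real_normed_vector"
  assumes "infinite {u. norm (x u) < \<epsilon>}"
  obtains v :: "nat \<Rightarrow> nat" where "strict_mono v" "\<And>b. a < v b \<and> norm (x (v b)) < \<epsilon>"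
proof -
  have "{u. a < u \<and> norm (x u) < \<epsilon>} = {u. norm (x u) < \<epsilon>} - {..a}"
    by auto
  then have inf: "infinite {u. a < u \<and> norm (x u) < \<epsilon>}"
    using assms by (simp add: Diff_infinite_finite)
  show ?thesis
    using enumerate_in_set[OF inf] by (intro that[OF strict_mono_enumerate[OF inf]]) simp
qed

lemma exists_strict_mono_small_tail:
  fixes x :: "nat \<Rightarrow> 'a::real_normed_vector" and t :: "nat \<Rightarrow> nat"
  assumes t: "strict_mono t" and small: "infinite {u. norm (x u) < \<epsilon>}"
  obtains w where "strict_mono w" "\<And>a. c \<le> w a" "\<And>a. a < e \<Longrightarrow> w a = t (c + a)"
    "\<And>b. norm (x (w (e + b))) < \<epsilon>"
proof -
  obtain v :: "nat \<Rightarrow> nat" where v: "strict_mono v" "\<And>b. t (c + e) < v b \<and> norm (x (v b)) < \<epsilon>"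
    using exists_strict_mono_small_above[OF small] by blast
  define w where "w a = (if a < e then t (c + a) else v (a - e))" for a
  have "w a < w b" if "a < b" for a b
  proof (cases "b < e")
    case True
    with that show ?thesis
      using strict_monoD[OF t] by (simp add: w_def)
  next
    case b: False
    show ?thesis
    proof (cases "a < e")
      case True
      then have "t (c + a) < t (c + e)"
        using strict_monoD[OF t] by simp
      also have "\<dots> < v (b - e)"
        using v(2) by blast
      finally show ?thesis
        using True b by (simp add: w_def)
    next
      case False
      with that b show ?thesis
        using strict_monoD[OF v(1)] by (simp add: w_def)
    qed
  qed
  then have "strict_mono w"
    by (rule strict_monoI)
  moreover have "c \<le> w a" for a
    using seq_suble[OF t, of "c + a"] seq_suble[OF t, of "c + e"] v(2)[of "a - e"]
    by (auto simp: w_def)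
  moreover have "norm (x (w (e + b))) < \<epsilon>" for b
    using v(2) by (simp add: w_def)
  ultimately show ?thesis
    using that by (simp add: w_def)
qed

lemma exists_continuation_with_large_block:
  fixes x :: "nat \<Rightarrow> 'a::real_normed_vector" and t nk X :: "nat \<Rightarrow> nat"
  assumes t: "strict_mono t" and unb: "\<not> bounded (range (\<lambda>N. \<Sum>i\<le>N. x (t i)))"
    and small: "\<And>\<epsilon>. \<epsilon> > 0 \<Longrightarrow> infinite {u. norm (x u) < \<epsilon>}"
    and nk: "strict_mono nk"
  obtains Y k where "j \<le> k" "n \<le> nk (Suc k)" "\<forall>i<n. Y i = X i"
    "\<forall>i l. i < l \<and> n \<le> l \<longrightarrow> Y i < Y l" "\<forall>i\<in>{nk k..<nk (Suc k)}. M < norm (\<Sum>l\<le>i. x (Y l))"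
proof -
  define c where "c = Suc (\<Sum>i<n. X i)"
  have X_less_c: "X i < c" if "i < n" for i
    using that member_le_sum[of i "{..<n}" X] by (simp add: c_def)
  define \<sigma> where "\<sigma> = (\<Sum>l<n. x (X l))"
  have "\<not> (\<forall>y\<in>range (\<lambda>e. \<sigma> + (\<Sum>a<e. x (t (c + a)))). norm y \<le> M + 1)"
    using unbounded_shifted_partial_sums[where x = x and t = t and \<sigma> = \<sigma> and r = c, OF unb]
    unfolding bounded_iff by blast
  then obtain e where e: "M + 1 < norm (\<sigma> + (\<Sum>a<e. x (t (c + a))))"
    by (auto simp: not_le)
  define k where "k = max j (n + e)"
  define L where "L = nk (Suc k)"
  have "n + e \<le> nk k"
    using seq_suble[OF nk, of k] by (simp add: k_def)
  moreover have "nk k < L"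
    using nk by (simp add: L_def strict_mono_def)
  ultimately have block: "n + e \<le> i" "i < L" if "i \<in> {nk k..<L}" for i
    using that by auto
  have "1 / (real L + 1) > 0"
    by (simp add: add_pos_nonneg)
  then obtain w where w: "strict_mono w" "\<And>a. c \<le> w a" "\<And>a. a < e \<Longrightarrow> w a = t (c + a)"
    "\<And>b. norm (x (w (e + b))) < 1 / (real L + 1)"
    using exists_strict_mono_small_tail[OF t small] by blast
  define Y where "Y = override_on (\<lambda>l. w (l - n)) X {..<n}"
  have "\<forall>i<n. Y i = X i"
    by (simp add: Y_def override_on_def)
  moreover have "\<forall>i l. i < l \<and> n \<le> l \<longrightarrow> Y i < Y l"
    using X_less_c w(2) strict_monoD[OF w(1)]
    by (auto simp: Y_def override_on_def intro: order.strict_trans2)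
  moreover have "M < norm (\<Sum>l\<le>i. x (Y l))" if "i \<in> {nk k..<L}" for i
  proof -
    define d where "d = Suc i - (n + e)"
    have "(\<Sum>l\<le>i. x (Y l)) = (\<Sum>l<n + (e + d). x (Y l))"
      using block[OF that] by (simp add: d_def lessThan_Suc_atMost[symmetric])
    also have "\<dots> = \<sigma> + (\<Sum>a<e. x (t (c + a))) + (\<Sum>b<d. x (w (e + b)))"
      by (simp add: sum_lessThan_add \<sigma>_def Y_def override_on_def w(3) add.assoc)
    finally have sum_eq: "(\<Sum>l\<le>i. x (Y l)) = \<sigma> + (\<Sum>a<e. x (t (c + a))) + (\<Sum>b<d. x (w (e + b)))" .
    have "norm (\<Sum>b<d. x (w (e + b))) < 1"
      using w(4) block[OF that] by (intro norm_sum_less_one[where L = L]) (auto simp: d_def)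
    with e show ?thesis
      unfolding sum_eq using norm_triangle_ineq4[of "\<sigma> + (\<Sum>a<e. x (t (c + a))) + (\<Sum>b<d. x (w (e + b)))"
          "\<Sum>b<d. x (w (e + b))"]
      by simp
  qed
  ultimately show ?thesis
    using that[of k Y] \<open>n + e \<le> nk k\<close> \<open>nk k < L\<close> by (simp add: k_def L_def)
qed

lemma exists_bij_extending:
  fixes f :: "nat \<Rightarrow> nat"
  assumes inj: "inj_on f {..<m}"
  obtains p where "bij p" "\<forall>i<m. p i = f i"
proof -
  define C where "C = - f ` {..<m}"
  have C: "infinite C"
    unfolding C_def by (simp add: Compl_eq_Diff_UNIV Diff_infinite_finite)
  define p where "p = override_on (\<lambda>i. enumerate C (i - m)) f {..<m}"
  have low: "bij_betw p {..<m} (f ` {..<m})"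
    using inj_on_imp_bij_betw[OF inj] by (rule bij_betw_cong[THEN iffD1, rotated]) (simp add: p_def)
  have "bij_betw ((+) m) UNIV {m..}"
    by (simp add: atLeast_def image_def) (metis le_add1 le_add_diff_inverse)
  then have high: "bij_betw p {m..} C"
    by (rule bij_betw_comp_iff[THEN iffD2]) (simp add: o_def p_def bij_enumerate[OF C])
  have "bij_betw p ({..<m} \<union> {m..}) (f ` {..<m} \<union> C)"
    using low high by (rule bij_betw_combine) (simp add: C_def)
  moreover have "{..<m} \<union> {m..} = (UNIV :: nat set)"
    by auto
  ultimately have "bij p"
    by (simp add: C_def)
  moreover have "\<forall>i<m. p i = f i"
    by (simp add: p_def)
  ultimately show ?thesis
    by (rule that)
qed

definition admits_increasing_continuations :: "(nat \<Rightarrow> nat) set \<Rightarrow> bool" where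
  "admits_increasing_continuations S \<longleftrightarrow>
     (\<forall>X\<in>S. \<forall>n m Y. (\<forall>i<n. Y i = X i) \<and> (\<forall>i l. i < l \<and> n \<le> l \<longrightarrow> Y i < Y l) \<longrightarrow>
        (\<exists>Z\<in>S. \<forall>i<m. Z i = Y i))"

lemma admits_increasing_continuations_incr_seqs: "admits_increasing_continuations incr_seqs"
  unfolding admits_increasing_continuations_def
proof (intro ballI allI impI)
  fix X n m and Y :: "nat \<Rightarrow> nat"
  assume "X \<in> incr_seqs" and Y: "(\<forall>i<n. Y i = X i) \<and> (\<forall>i l. i < l \<and> n \<le> l \<longrightarrow> Y i < Y l)"
  have "Y i < Y l" if "i < l" for i l
  proof (cases "n \<le> l")
    case True
    with Y that show ?thesis
      by blast
  next
    case False
    with that have "i < n" "l < n"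
      by auto
    with Y that \<open>X \<in> incr_seqs\<close> show ?thesis
      by (simp add: incr_seqs_def strict_mono_def)
  qed
  then have "strict_mono Y"
    by (rule strict_monoI)
  then show "\<exists>Z\<in>incr_seqs. \<forall>i<m. Z i = Y i"
    by (auto simp: incr_seqs_def)
qed

lemma admits_increasing_continuations_perms_nat: "admits_increasing_continuations perms_nat"
  unfolding admits_increasing_continuations_def
proof (intro ballI allI impI)
  fix X n m and Y :: "nat \<Rightarrow> nat"
  assume "X \<in> perms_nat" and Y: "(\<forall>i<n. Y i = X i) \<and> (\<forall>i l. i < l \<and> n \<le> l \<longrightarrow> Y i < Y l)"
  then have "inj X"
    by (simp add: perms_nat_def bij_is_inj)
  have "Y i \<noteq> Y l" if "i < l" for i l
  proof (cases "n \<le> l")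
    case True
    with Y that show ?thesis
      by (metis less_irrefl)
  next
    case False
    with Y that \<open>inj X\<close> show ?thesis
      by (metis inj_eq less_irrefl not_le order.strict_trans)
  qed
  then have "inj_on Y {..<m}"
    by (metis inj_onI linorder_neqE_nat)
  then obtain p where "bij p" "\<forall>i<m. p i = Y i"
    by (rule exists_bij_extending)
  then show "\<exists>Z\<in>perms_nat. \<forall>i<m. Z i = Y i"
    by (auto simp: perms_nat_def)
qed

definition meets_ball_on_blocks :: "(nat \<Rightarrow> nat) \<Rightarrow> nat \<Rightarrow> real \<Rightarrow> (nat \<Rightarrow> 'a::real_normed_vector) \<Rightarrow> bool" where
  "meets_ball_on_blocks nk j M y \<longleftrightarrow> (\<forall>k\<ge>j. \<exists>i\<in>{nk k..<nk (Suc k)}. norm (y i) \<le> M)"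

lemma I_bounded_imp_meets_ball_on_blocks:
  assumes part: "\<forall>A\<in>I. \<exists>j. \<forall>k\<ge>j. \<not> {nk k..<nk (Suc k)} \<subseteq> A" and "I_bounded I y"
  shows "\<exists>n. meets_ball_on_blocks nk n (real n) y"
proof -
  obtain M where "{i. M < norm (y i)} \<in> I"
    using \<open>I_bounded I y\<close> unfolding I_bounded_def by blast
  then obtain j where j: "\<forall>k\<ge>j. \<not> {nk k..<nk (Suc k)} \<subseteq> {i. M < norm (y i)}"
    using part by blast
  define n where "n = max j (nat \<lceil>M\<rceil>)"
  have "\<exists>i\<in>{nk k..<nk (Suc k)}. norm (y i) \<le> real n" if "n \<le> k" for k
  proof -
    have "\<not> {nk k..<nk (Suc k)} \<subseteq> {i. M < norm (y i)}"
      using j that by (simp add: n_def)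
    then obtain i where "i \<in> {nk k..<nk (Suc k)}" "\<not> M < norm (y i)"
      by blast
    moreover have "M \<le> real n"
      unfolding n_def by linarith
    ultimately show ?thesis
      by force
  qed
  then show ?thesis
    unfolding meets_ball_on_blocks_def by blast
qed

lemma nowhere_dense_meets_ball_on_blocks:
  fixes x :: "nat \<Rightarrow> 'a::real_normed_vector"
    and t :: "nat \<Rightarrow> nat"
  assumes S: "admits_increasing_continuations S"
    and t: "strict_mono t" and unb: "\<not> bounded (range (\<lambda>N. \<Sum>i\<le>N. x (t i)))"
    and small: "\<And>\<epsilon>. \<epsilon> > 0 \<Longrightarrow> infinite {u. norm (x u) < \<epsilon>}"
    and nk: "strict_mono nk"
  shows "nowhere_dense_cyl S {s\<in>S. meets_ball_on_blocks nk j M (\<lambda>n. \<Sum>i\<le>n. x (s i))}"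
  unfolding nowhere_dense_cyl_def
proof (intro ballI allI)
  fix X n assume "X \<in> S"
  obtain Y k where Y: "j \<le> k" "n \<le> nk (Suc k)" "\<forall>i<n. Y i = X i" "\<forall>i l. i < l \<and> n \<le> l \<longrightarrow> Y i < Y l"
    "\<forall>i\<in>{nk k..<nk (Suc k)}. M < norm (\<Sum>l\<le>i. x (Y l))"
    by (rule exists_continuation_with_large_block[OF t unb small nk])
  obtain Z where Z: "Z \<in> S" "\<forall>i<nk (Suc k). Z i = Y i"
    using S[unfolded admits_increasing_continuations_def, rule_format, of X n Y "nk (Suc k)"]
      \<open>X \<in> S\<close> Y(3,4) by blast
  have "\<not> meets_ball_on_blocks nk j M (\<lambda>n. \<Sum>i\<le>n. x (W i))" if "W \<in> cyl Z (nk (Suc k))" for W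
  proof -
    have "(\<Sum>l\<le>i. x (W l)) = (\<Sum>l\<le>i. x (Y l))" if "i < nk (Suc k)" for i
      using \<open>W \<in> cyl Z _\<close> Z(2) that by (intro sum.cong) (auto simp: cyl_def)
    with Y(1,5) show ?thesis
      unfolding meets_ball_on_blocks_def by (fastforce simp: not_le)
  qed
  then have "S \<inter> cyl Z (nk (Suc k)) \<inter> {s\<in>S. meets_ball_on_blocks nk j M (\<lambda>n. \<Sum>i\<le>n. x (s i))} = {}"
    by blast
  with Z Y(2,3) show "\<exists>Z\<in>S. \<exists>m\<ge>n. (\<forall>i<n. Z i = X i) \<and>
      S \<inter> cyl Z m \<inter> {s\<in>S. meets_ball_on_blocks nk j M (\<lambda>n. \<Sum>i\<le>n. x (s i))} = {}"
    by (intro bexI[of _ Z] exI[of _ "nk (Suc k)"]) auto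
qed

lemma meager_I_bounded_rearrangements:
  fixes x :: "nat \<Rightarrow> 'a::real_normed_vector" and t :: "nat \<Rightarrow> nat"
  assumes S: "admits_increasing_continuations S"
    and t: "strict_mono t" and unb: "\<not> bounded (range (\<lambda>N. \<Sum>i\<le>N. x (t i)))"
    and small: "\<And>\<epsilon>. \<epsilon> > 0 \<Longrightarrow> infinite {u. norm (x u) < \<epsilon>}"
    and nk: "strict_mono nk" and part: "\<forall>A\<in>I. \<exists>j. \<forall>k\<ge>j. \<not> {nk k..<nk (Suc k)} \<subseteq> A"
  shows "meager_in (subtopology baire_top S) {s\<in>S. I_bounded I (\<lambda>n. \<Sum>i\<le>n. x (s i))}"
  unfolding baire_top_def meager_in_subtopology_iff_cyl
proof (intro exI conjI allI)
  let ?F = "\<lambda>n. {s\<in>S. meets_ball_on_blocks nk n (real n) (\<lambda>n. \<Sum>i\<le>n. x (s i))}"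
  show "nowhere_dense_cyl S (?F n)" for n
    by (rule nowhere_dense_meets_ball_on_blocks[OF S t unb small nk])
  show "{s\<in>S. I_bounded I (\<lambda>n. \<Sum>i\<le>n. x (s i))} \<subseteq> (\<Union>n. ?F n)"
    using I_bounded_imp_meets_ball_on_blocks[OF part] by blast
qed auto

theorem mainTheorem3:
  fixes x :: "nat \<Rightarrow> 'a::banach" and I :: "nat set set"
  assumes liminf0: "liminf (\<lambda>n. ereal (norm (x n))) = 0"
    and ideal: "is_ideal I"
    and baire: "ideal_Baire_property I"
    and unb: "\<exists>s\<in>incr_seqs. \<not> bounded (range (\<lambda>n. \<Sum>i\<le>n. x (s i)))"
  shows "meager_in (subtopology baire_top incr_seqs)
           {s\<in>incr_seqs. I_bounded I (\<lambda>n. \<Sum>i\<le>n. x (s i))} \<and>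
         meager_in (subtopology baire_top perms_nat)
           {p\<in>perms_nat. I_bounded I (\<lambda>n. \<Sum>i\<le>n. x (p i))}"
proof -
  obtain t :: "nat \<Rightarrow> nat" where t: "strict_mono t" "\<not> bounded (range (\<lambda>n. \<Sum>i\<le>n. x (t i)))"
    using unb unfolding incr_seqs_def by blast
  have small: "\<And>\<epsilon>. \<epsilon> > 0 \<Longrightarrow> infinite {u. norm (x u) < \<epsilon>}"
    by (rule infinite_small_if_liminf_norm_zero[OF liminf0])
  have hereditary: "\<forall>A\<in>I. \<forall>B\<subseteq>A. B \<in> I"
    using ideal by (simp add: is_ideal_def)
  obtain nk where nk: "strict_mono nk" and part: "\<forall>A\<in>I. \<exists>j. \<forall>k\<ge>j. \<not> {nk k..<nk (Suc k)} \<subseteq> A"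
    using meager_hereditary_interval_partition[OF hereditary meager_if_ideal_Baire_property[OF ideal baire]]
    by blast
  show ?thesis
    using meager_I_bounded_rearrangements[OF _ t small nk part]
      admits_increasing_continuations_incr_seqs admits_increasing_continuations_perms_nat
    by blast
qed

end
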